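(* Assume Hypothesis 2 below and set $\rho=\lambda/\mu$ and $\bar\omega_0^{*,D}=\dfrac{\rho d-\mu^{-1}}{\rho-1}$. Then for every $\xi>0$, $\mathbb{P}(\bar\omega_0^{n,D}\le\bar\omega_0^{*,D}-\xi)\to0$ as $n\to\infty$.
   Context: Hypothesis 2 (M/M/1/1+D-EDF systems): for each $n\ge1$, an M/M/1/1+GI-EDF queue (Poisson arrivals, one non-idling server, infinite buffer, non-preemptive Earliest-Deadline-First discipline, residual time credits decreasing at unit rate, a customer whose residual credit reaches $0$ before entering service is lost) such that: initially there are $n+1$ customers in the buffer, all with time credit $nd$, where $d>0$; the arrival intensity $\lambda^n$ satisfies $\lambda^n\to\lambda>0$; service durations are i.i.d. exponential with parameter $\mu^n$, $\mu^n\to\mu$ where $d^{-1}<\mu<\lambda$; the initial time credit of every arriving customer is the deterministic number $d^n$, with $d^n/n\to d$. Let $\nu^{n,D}_t$ be its profile (point measure with a unit atom at the residual time credit of each customer waiting in the buffer at $t$ and of each customer lost up to $t$), $t_1(\nu)$ the smallest atom of $\nu$ in $(0,\infty)$, $\omega_0^{n,D}=\inf\{t\ge0:t_1(\nu^{n,D}_t)=0\}$ the first time of loss, and $\bar\omega_0^{n,D}=\omega_0^{n,D}/n$. *)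

theory Defs
  imports "HOL-Probability.Probability"
begin

text \<open>
  Deterministic sample-path construction of the M/M/1/1+D-EDF queue of Hypothesis 2
  (n-th system).  Parameters: n, d (initial credit of the n+1 initial customers is n*d),
  dn (initial credit of every arriving customer), A (interarrival times: the k-th arrival,
  k = 0,1,..., occurs at time A 0 + ... + A k), S (service durations: S m is the duration
  of the m-th service started, m = 0,1,...).
\<close>

datatype cust = Init nat | Arr nat

definition is_cust :: "nat \<Rightarrow> cust \<Rightarrow> bool" where
  "is_cust n c = (case c of Init i \<Rightarrow> i \<le> n | Arr k \<Rightarrow> True)"

definition arr_time :: "(nat \<Rightarrow> real) \<Rightarrow> cust \<Rightarrow> real" where
  "arr_time A c = (case c of Init i \<Rightarrow> 0 | Arr k \<Rightarrow> (\<Sum>i\<le>k. A i))"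

text \<open>Deadline = arrival time + initial time credit (residual credit at time t is
  deadline - t).\<close>
definition deadline :: "nat \<Rightarrow> real \<Rightarrow> real \<Rightarrow> (nat \<Rightarrow> real) \<Rightarrow> cust \<Rightarrow> real" where
  "deadline n d dn A c = (case c of Init i \<Rightarrow> real n * d | Arr k \<Rightarrow> arr_time A c + dn)"

definition avail :: "nat \<Rightarrow> real \<Rightarrow> real \<Rightarrow> (nat \<Rightarrow> real) \<Rightarrow> real \<Rightarrow> cust set \<Rightarrow> cust set" where
  "avail n d dn A t Sd = {c. is_cust n c \<and> arr_time A c \<le> t \<and> c \<notin> Sd \<and> t < deadline n d dn A c}"

definition edf_pick :: "nat \<Rightarrow> real \<Rightarrow> real \<Rightarrow> (nat \<Rightarrow> real) \<Rightarrow> cust set \<Rightarrow> cust" where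
  "edf_pick n d dn A X = (SOME c. c \<in> X \<and> (\<forall>c'\<in>X. deadline n d dn A c \<le> deadline n d dn A c'))"

text \<open>sim m = (time at which the m-th service starts, set of customers that entered
  service before it).  Non-idling, non-preemptive: the next service starts at the end of
  the current one if somebody is waiting, otherwise at the next arrival.\<close>
fun sim :: "nat \<Rightarrow> real \<Rightarrow> real \<Rightarrow> (nat \<Rightarrow> real) \<Rightarrow> (nat \<Rightarrow> real) \<Rightarrow> nat \<Rightarrow> real \<times> cust set" where
  "sim n d dn A S 0 = (0, {})"
| "sim n d dn A S (Suc m) =
     (let (\<sigma>, Sd) = sim n d dn A S m;
          c = edf_pick n d dn A (avail n d dn A \<sigma> Sd);
          Sd' = insert c Sd;
          e = \<sigma> + S m;
          \<sigma>' = (if avail n d dn A e Sd' \<noteq> {} then e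
                else Inf {arr_time A (Arr k) | k. e < arr_time A (Arr k)})
      in (\<sigma>', Sd'))"

definition served :: "nat \<Rightarrow> real \<Rightarrow> real \<Rightarrow> (nat \<Rightarrow> real) \<Rightarrow> (nat \<Rightarrow> real) \<Rightarrow> cust set" where
  "served n d dn A S = (\<Union>m. snd (sim n d dn A S m))"

text \<open>A customer that never enters service is lost when its residual credit hits 0,
  i.e. at its deadline.\<close>
definition lost :: "nat \<Rightarrow> real \<Rightarrow> real \<Rightarrow> (nat \<Rightarrow> real) \<Rightarrow> (nat \<Rightarrow> real) \<Rightarrow> cust set" where
  "lost n d dn A S = {c. is_cust n c \<and> c \<notin> served n d dn A S}"

text \<open>First time of loss omega_0 (= +infinity if no customer is ever lost).\<close>
definition first_loss :: "nat \<Rightarrow> real \<Rightarrow> real \<Rightarrow> (nat \<Rightarrow> real) \<Rightarrow> (nat \<Rightarrow> real) \<Rightarrow> ereal" where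
  "first_loss n d dn A S = Inf ((\<lambda>c. ereal (deadline n d dn A c)) ` lost n d dn A S)"

end

theory Submission
  imports Defs
begin

text \<open>Suppose a customer \<open>c\<close> with deadline \<open>D\<close> is lost.  Go back from \<open>D\<close> to the last time
  \<open>t0\<close> at which the server was idle or served a customer with a deadline later than \<open>D\<close>.  On
  \<open>[t0, D]\<close> the server was busy all the time, and only with customers that arrived in
  \<open>[t0, D - dn]\<close>; if there is no such time, it was busy on \<open>[0, D]\<close> with customers of deadline
  at most \<open>D\<close>, the \<open>n + 1\<close> initial ones included.  Fluid bounds on the arrival counts and on sums
  of service times, with errors \<open>o(n)\<close>, rule both cases out as long as \<open>D < n tau\<close> for a
  fixed \<open>tau\<close> below the fluid loss time \<open>(rho d - 1/mu) / (rho - 1)\<close>.  By Chebyshev's inequality for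
  Erlang variables these bounds hold with probability \<open>1 - O(1/n)\<close>: it suffices to control the
  partial sums of interarrival and service times at boundedly many grid points spaced
  \<open>theta n\<close> apart.\<close>

section \<open>Sample paths of the EDF queue\<close>

locale edf_path =
  fixes n :: nat and d dn :: real and A S :: "nat \<Rightarrow> real"
  assumes A_pos: "\<And>k. 0 < A k" and S_nonneg: "\<And>j. 0 \<le> S j"
    and dn_pos: "0 < dn" and init_deadline_pos: "0 < real n * d"
begin

abbreviation "arr \<equiv> arr_time A"
abbreviation "dl \<equiv> deadline n d dn A"
abbreviation "waiting \<equiv> avail n d dn A"

definition "arrival k = (\<Sum>i\<le>k. A i)"
definition "start m = fst (sim n d dn A S m)"
definition "entered m = snd (sim n d dn A S m)"
definition "pick m = edf_pick n d dn A (waiting (start m) (entered m))"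

lemma start_0: "start 0 = 0" and entered_0: "entered 0 = {}"
  by (simp_all add: start_def entered_def)

lemma entered_Suc: "entered (Suc m) = insert (pick m) (entered m)"
  and start_Suc: "start (Suc m) =
    (if waiting (start m + S m) (insert (pick m) (entered m)) \<noteq> {} then start m + S m
     else Inf {arr (Arr k) | k. start m + S m < arr (Arr k)})"
  by (simp_all add: start_def entered_def pick_def split_beta Let_def)

lemma entered_eq: "entered m = pick ` {..<m}"
  by (induction m) (auto simp: entered_0 entered_Suc lessThan_Suc)

lemma arr_time_simps [simp]: "arr (Arr k) = arrival k" "arr (Init i) = 0"
  by (simp_all add: arr_time_def arrival_def)

lemma deadline_simps [simp]: "dl (Arr k) = arrival k + dn" "dl (Init i) = real n * d"
  by (simp_all add: deadline_def)

lemma strict_mono_arrival: "strict_mono arrival"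
  by (rule strict_monoI_Suc) (simp add: arrival_def A_pos)

lemma arrival_less_iff [simp]: "arrival k < arrival k' \<longleftrightarrow> k < k'"
  and arrival_le_iff [simp]: "arrival k \<le> arrival k' \<longleftrightarrow> k \<le> k'"
  using strict_mono_arrival by (simp_all add: strict_mono_less strict_mono_less_eq)

lemma arrival_pos: "0 < arrival k"
  using arrival_le_iff[of 0 k] A_pos[of 0] by (simp add: arrival_def)

lemma arr_time_nonneg: "0 \<le> arr c"
  using arrival_pos by (cases c) (auto intro: less_imp_le)

lemma arr_time_less_deadline: "arr c < dl c"
  using dn_pos init_deadline_pos by (cases c) auto

lemma deadline_pos: "0 < dl c"
  using arr_time_nonneg arr_time_less_deadline by (rule le_less_trans)

lemma customers_before_subset:
  "{c. is_cust n c \<and> arr c < arrival K} \<subseteq> Init ` {..n} \<union> Arr ` {..<K}"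
proof
  fix c assume "c \<in> {c. is_cust n c \<and> arr c < arrival K}"
  then show "c \<in> Init ` {..n} \<union> Arr ` {..<K}" by (cases c) (auto simp: is_cust_def)
qed

lemma finite_customers_before: "finite {c. is_cust n c \<and> arr c < arrival K}"
  by (rule finite_subset[OF customers_before_subset]) auto

lemma card_customers_before: "card {c. is_cust n c \<and> arr c < arrival K} \<le> n + 1 + K"
proof -
  have "card {c. is_cust n c \<and> arr c < arrival K} \<le> card (Init ` {..n} \<union> Arr ` {..<K})"
    by (intro card_mono customers_before_subset) auto
  also have "\<dots> \<le> card (Init ` {..n}) + card (Arr ` {..<K})" by (rule card_Un_le)
  also have "\<dots> \<le> n + 1 + K"
    using card_image_le[of "{..n}" Init] card_image_le[of "{..<K}" Arr] by simp
  finally show ?thesis .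
qed

lemma finite_waiting: "t < arrival K \<Longrightarrow> finite (waiting t X)"
  by (rule finite_subset[OF _ finite_customers_before[of K]]) (auto simp: avail_def)

lemma edf_pick_spec:
  assumes "finite X" "X \<noteq> {}"
  shows "edf_pick n d dn A X \<in> X \<and> (\<forall>c'\<in>X. dl (edf_pick n d dn A X) \<le> dl c')"
proof -
  obtain c where "c \<in> X" "dl c = Min (dl ` X)"
    using Min_in[of "dl ` X"] assms by (metis finite_imageI image_iff image_is_empty)
  then have "\<exists>c. c \<in> X \<and> (\<forall>c'\<in>X. dl c \<le> dl c')" using assms by auto
  then show ?thesis unfolding edf_pick_def by (rule someI_ex)
qed

definition "regular m \<longleftrightarrow>
  waiting (start m) (entered m) \<noteq> {} \<and> (\<forall>c\<in>entered m. arr c \<le> start m) \<and> 0 \<le> start m"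

text \<open>Arrival times need not diverge, so the path is only followed while services end before
  some arrival \<open>K\<close>: then the waiting room is finite and the infimum in \<^const>\<open>sim\<close> is attained.\<close>
definition "before_horizon K m \<longleftrightarrow> (\<forall>j<m. start j + S j < arrival K)"

lemma regular_0: "regular 0"
proof -
  have "Init 0 \<in> waiting 0 {}" using init_deadline_pos by (auto simp: avail_def is_cust_def)
  then show ?thesis by (auto simp: regular_def start_0 entered_0)
qed

lemma start_Suc_eq:
  assumes e: "start j + S j < arrival K"
  defines "k0 \<equiv> LEAST k. start j + S j < arrival k"
  shows "start (Suc j) =
    (if waiting (start j + S j) (entered (Suc j)) \<noteq> {} then start j + S j else arrival k0)"
    and "start j + S j < arrival k0" and "\<And>k. start j + S j < arrival k \<Longrightarrow> k0 \<le> k"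
proof -
  show k0: "start j + S j < arrival k0" unfolding k0_def by (rule LeastI[of _ K]) (use e in auto)
  show k0_le: "\<And>k. start j + S j < arrival k \<Longrightarrow> k0 \<le> k" unfolding k0_def by (rule Least_le)
  have "Inf {arr (Arr k) | k. start j + S j < arr (Arr k)} = arrival k0"
    by (rule cInf_eq_minimum) (use k0 k0_le in auto)
  then show "start (Suc j) =
    (if waiting (start j + S j) (entered (Suc j)) \<noteq> {} then start j + S j else arrival k0)"
    by (simp add: start_Suc entered_Suc)
qed

lemma pick_spec:
  assumes "regular j" "start j + S j < arrival K"
  shows "pick j \<in> waiting (start j) (entered j)"
    and "\<And>c'. c' \<in> waiting (start j) (entered j) \<Longrightarrow> dl (pick j) \<le> dl c'"
proof -
  have "finite (waiting (start j) (entered j))"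
    using assms(2) S_nonneg[of j] by (intro finite_waiting[of _ K]) auto
  moreover have "waiting (start j) (entered j) \<noteq> {}" using assms(1) by (simp add: regular_def)
  ultimately show "pick j \<in> waiting (start j) (entered j)"
    "\<And>c'. c' \<in> waiting (start j) (entered j) \<Longrightarrow> dl (pick j) \<le> dl c'"
    using edf_pick_spec unfolding pick_def by blast+
qed

lemma start_Suc_ge: "start j + S j < arrival K \<Longrightarrow> start j + S j \<le> start (Suc j)"
  using start_Suc_eq[of j K] by auto

lemma start_Suc_idle:
  assumes "start j + S j < arrival K" "start (Suc j) \<noteq> start j + S j"
  shows "waiting (start j + S j) (entered (Suc j)) = {}"
    and "\<And>k. start j + S j < arrival k \<Longrightarrow> start (Suc j) \<le> arrival k"
  using start_Suc_eq[OF assms(1)] assms(2) by (auto split: if_splits)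

lemma regular_Suc:
  assumes I: "regular j" and e: "start j + S j < arrival K"
  shows "regular (Suc j)"
proof -
  obtain k0 where sS: "start (Suc j) =
      (if waiting (start j + S j) (entered (Suc j)) \<noteq> {} then start j + S j else arrival k0)"
    and k0: "start j + S j < arrival k0"
    using start_Suc_eq[OF e] by blast
  have arrived: "\<forall>c\<in>entered (Suc j). arr c \<le> start j"
    using I pick_spec(1)[OF I e] by (auto simp: regular_def entered_Suc avail_def)
  then have "Arr k0 \<in> waiting (arrival k0) (entered (Suc j))"
    using k0 S_nonneg[of j] dn_pos by (auto simp: avail_def is_cust_def)
  then have "waiting (start (Suc j)) (entered (Suc j)) \<noteq> {}" using sS by (auto split: if_splits)
  moreover have "\<forall>c\<in>entered (Suc j). arr c \<le> start (Suc j)"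
    using arrived start_Suc_ge[OF e] S_nonneg[of j] by force
  moreover have "0 \<le> start (Suc j)"
    using start_Suc_ge[OF e] I S_nonneg[of j] by (auto simp: regular_def)
  ultimately show ?thesis by (simp add: regular_def)
qed

lemma regular_upto: "before_horizon K m \<Longrightarrow> j \<le> m \<Longrightarrow> regular j"
proof (induction j)
  case 0 show ?case by (rule regular_0)
next
  case (Suc j) then show ?case using regular_Suc[of j K] by (auto simp: before_horizon_def)
qed

context
  fixes K m assumes hor: "before_horizon K m"
begin

lemma pick_waiting: "j < m \<Longrightarrow> pick j \<in> waiting (start j) (entered j)"
  using pick_spec(1) regular_upto[OF hor] hor by (auto simp: before_horizon_def)

lemma pick_earliest:
  "j < m \<Longrightarrow> c' \<in> waiting (start j) (entered j) \<Longrightarrow> dl (pick j) \<le> dl c'"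
  using pick_spec(2) regular_upto[OF hor] hor by (auto simp: before_horizon_def)

lemma start_nonneg: "j \<le> m \<Longrightarrow> 0 \<le> start j"
  using regular_upto[OF hor] by (simp add: regular_def)

lemma start_mono: "i \<le> j \<Longrightarrow> j \<le> m \<Longrightarrow> start i \<le> start j"
proof (induction j rule: dec_induct)
  case (step j)
  then show ?case using start_Suc_ge[of j K] hor S_nonneg[of j] by (force simp: before_horizon_def)
qed simp

lemma inj_on_pick: "inj_on pick {..<m}"
proof (rule inj_onI)
  have new: "pick j \<notin> pick ` {..<j}" if "j < m" for j
    using pick_waiting[OF that] by (auto simp: avail_def entered_eq)
  fix i j assume "i \<in> {..<m}" "j \<in> {..<m}" "pick i = pick j"
  then show "i = j"
    using new[of i] new[of j] by (cases i j rule: linorder_cases) (metis imageI lessThan_iff)+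
qed

end

lemma start_sum:
  assumes "\<And>i. r \<le> i \<Longrightarrow> i < j \<Longrightarrow> start (Suc i) = start i + S i" "r \<le> j"
  shows "start j = start r + (\<Sum>i\<in>{r..<j}. S i)"
  using assms(2,1) by (induction j rule: dec_induct) (simp_all add: sum.atLeastLessThan_Suc)

text \<open>Otherwise \<open>J + 1\<close> distinct customers, all arrived before arrival \<open>K\<close>, would be served.\<close>
lemma start_exceeds:
  assumes Sb: "\<And>j. j \<le> J \<Longrightarrow> S j \<le> Sb" and t: "t + Sb \<le> arrival K"
    and J: "n + 1 + K \<le> J"
  shows "\<exists>m\<le>J. t \<le> start m"
proof (rule ccontr)
  assume "\<not> ?thesis"
  then have early: "\<And>m. m \<le> J \<Longrightarrow> start m < t" by force
  have "0 \<le> Sb" using Sb[of 0] S_nonneg[of 0] by simp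
  then have early': "\<And>m. m \<le> J \<Longrightarrow> start m < arrival K" using early t by fastforce
  have hor: "before_horizon K (Suc J)"
    unfolding before_horizon_def
  proof (intro allI impI)
    fix j assume "j < Suc J"
    then have "start j < t" "S j \<le> Sb" using early Sb by auto
    then show "start j + S j < arrival K" using t by linarith
  qed
  have "pick ` {..<Suc J} \<subseteq> {c. is_cust n c \<and> arr c < arrival K}"
  proof
    fix x assume "x \<in> pick ` {..<Suc J}"
    then obtain j where "j \<le> J" "x = pick j" by (auto simp: less_Suc_eq_le)
    then show "x \<in> {c. is_cust n c \<and> arr c < arrival K}"
      using pick_waiting[OF hor, of j] early'[of j] by (auto simp: avail_def)
  qed
  then have "card (pick ` {..<Suc J}) \<le> card {c. is_cust n c \<and> arr c < arrival K}"
    by (rule card_mono[OF finite_customers_before])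
  also have "\<dots> \<le> n + 1 + K" by (rule card_customers_before)
  finally show False using card_image[OF inj_on_pick[OF hor]] J by simp
qed

lemma Arr_if_arrives_late:
  assumes "0 \<le> t" "t < arr x"
  obtains k where "x = Arr k" "dl x = arrival k + dn" "t < arrival k"
  using assms by (cases x) auto

lemma card_deadline_le:
  assumes "D < arrival K + dn"
  shows "card {c. is_cust n c \<and> dl c \<le> D}
    \<le> (if real n * d \<le> D then n + 1 else 0) + card {k. arrival k + dn \<le> D}"
proof -
  let ?I = "if real n * d \<le> D then Init ` {..n} else {}"
  have fin: "finite {k. arrival k + dn \<le> D}"
    by (rule finite_subset[of _ "{..<K}"]) (use assms in \<open>auto simp flip: arrival_less_iff\<close>)
  have "{c. is_cust n c \<and> dl c \<le> D} \<subseteq> ?I \<union> Arr ` {k. arrival k + dn \<le> D}"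
  proof
    fix c assume "c \<in> {c. is_cust n c \<and> dl c \<le> D}"
    then show "c \<in> ?I \<union> Arr ` {k. arrival k + dn \<le> D}" by (cases c) (auto simp: is_cust_def)
  qed
  then have "card {c. is_cust n c \<and> dl c \<le> D} \<le> card (?I \<union> Arr ` {k. arrival k + dn \<le> D})"
    by (rule card_mono[rotated]) (use fin in auto)
  also have "\<dots> \<le> card ?I + card (Arr ` {k. arrival k + dn \<le> D})" by (rule card_Un_le)
  also have "\<dots> \<le> (if real n * d \<le> D then n + 1 else 0) + card {k. arrival k + dn \<le> D}"
    using card_image_le[of "{..n}" Init] card_image_le[OF fin, of Arr] by auto
  finally show ?thesis .
qed

end

lemma card_insert_image_ge:
  assumes "inj_on f I" "f ` I \<subseteq> W - {c}" "c \<in> W" "finite W"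
  shows "card I + 1 \<le> card W"
proof -
  have "finite (f ` I)" using assms(2,4) by (meson Diff_subset finite_subset subset_trans)
  moreover have "c \<notin> f ` I" using assms(2) by blast
  ultimately have "card (insert c (f ` I)) = card I + 1" using card_image[OF assms(1)] by simp
  moreover have "card (insert c (f ` I)) \<le> card W" using assms by (intro card_mono) auto
  ultimately show ?thesis by simp
qed

section \<open>A lost customer forces an overloaded busy period\<close>

locale lost_customer = edf_path +
  fixes c :: cust and K J :: nat and Sb :: real
  assumes c_cust: "is_cust n c" and c_lost: "\<And>m. c \<notin> entered m"
    and S_bound: "\<And>j. j \<le> J \<Longrightarrow> S j \<le> Sb"
    and horizon: "dl c + Sb \<le> arrival K" and J_large: "n + 1 + K \<le> J"
begin

definition "q = (LEAST m. dl c \<le> start (Suc m))"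

definition "busy_from_start \<longleftrightarrow> (\<exists>L\<le>J.
  L + 1 \<le> card {c'. is_cust n c' \<and> dl c' \<le> dl c} \<and> dl c \<le> (\<Sum>j<L. S j))"

definition "busy_window \<longleftrightarrow> (\<exists>t0 u L. 0 \<le> t0 \<and> t0 + dn \<le> dl c \<and> u + L \<le> J \<and>
  L \<le> card {k. t0 \<le> arrival k \<and> arrival k + dn \<le> dl c} \<and>
  dl c - t0 \<le> (\<Sum>j\<in>{u..<u+L}. S j))"

lemma deadline_le_start_Suc_q: "dl c \<le> start (Suc q)" and q_less_J: "q < J"
proof -
  obtain m where m: "m \<le> J" "dl c \<le> start m"
    using start_exceeds[OF S_bound horizon J_large] by blast
  then obtain m' where m': "m = Suc m'" using deadline_pos[of c] start_0 by (cases m) auto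
  show "dl c \<le> start (Suc q)" unfolding q_def by (rule LeastI[of _ m']) (use m m' in simp)
  have "q \<le> m'" unfolding q_def by (rule Least_le) (use m m' in simp)
  then show "q < J" using m m' by simp
qed

lemma start_less_deadline: "j \<le> q \<Longrightarrow> start j < dl c"
proof (cases j)
  case 0 then show ?thesis using deadline_pos start_0 by simp
next
  case (Suc i)
  assume "j \<le> q"
  then have "i < q" using Suc by simp
  then show ?thesis using not_less_Least[of i "\<lambda>m. dl c \<le> start (Suc m)"] Suc by (simp add: q_def)
qed

lemma before_horizon_Suc_q: "before_horizon K (Suc q)"
  unfolding before_horizon_def
proof (intro allI impI)
  fix j assume "j < Suc q"
  then have "start j < dl c" "S j \<le> Sb" using start_less_deadline S_bound q_less_J by auto
  then show "start j + S j < arrival K" using horizon by linarith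
qed

lemma Sb_nonneg: "0 \<le> Sb"
  using S_bound[of 0] S_nonneg[of 0] by simp

lemma pick_ne_c: "pick j \<noteq> c"
  using c_lost[of "Suc j"] by (auto simp: entered_Suc)

lemma pick_waiting_earlier:
  assumes "i \<le> j" "j \<le> q" "t \<le> start j" "arr (pick j) \<le> t"
  shows "pick j \<in> waiting t (entered i)"
proof -
  have "entered i \<subseteq> entered j" using assms(1) by (auto simp: entered_eq)
  then show ?thesis using pick_waiting[OF before_horizon_Suc_q, of j] assms by (auto simp: avail_def)
qed

lemma pick_deadline_if_c_arrived: "j \<le> q \<Longrightarrow> arr c \<le> start j \<Longrightarrow> dl (pick j) \<le> dl c"
  using pick_earliest[OF before_horizon_Suc_q, of j c] start_less_deadline c_cust c_lost
  by (auto simp: avail_def)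

lemma idle_before_arrival:
  assumes "j < q" "start (Suc j) \<noteq> start j + S j"
  shows "start j + S j < arr c"
proof (rule ccontr)
  assume arrived: "\<not> ?thesis"
  have hj: "start j + S j < arrival K" using before_horizon_Suc_q assms(1) by (simp add: before_horizon_def)
  have "start j + S j \<le> start (Suc j)" by (rule start_Suc_ge[OF hj])
  also have "start (Suc j) < dl c" using assms(1) by (intro start_less_deadline) simp
  finally have "c \<in> waiting (start j + S j) (entered (Suc j))"
    using arrived c_cust c_lost by (auto simp: avail_def)
  then show False using start_Suc_idle(1)[OF hj assms(2)] by blast
qed

text \<open>If the server idled after service \<open>q\<close>, it would restart no later than the arrival of
  \<open>c\<close>, hence before the deadline of \<open>c\<close>.\<close>
lemma deadline_le_end_q: "dl c \<le> start q + S q"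
proof (rule ccontr)
  assume late: "\<not> ?thesis"
  have hq: "start q + S q < arrival K"
    using before_horizon_Suc_q by (simp add: before_horizon_def)
  then have idle: "start (Suc q) \<noteq> start q + S q" using deadline_le_start_Suc_q late by auto
  have "\<not> arr c \<le> start q + S q"
  proof
    assume "arr c \<le> start q + S q"
    then have "c \<in> waiting (start q + S q) (entered (Suc q))"
      using late c_cust c_lost by (auto simp: avail_def)
    then show False using start_Suc_idle(1)[OF hq idle] by auto
  qed
  moreover have "0 \<le> start q + S q"
    using start_nonneg[OF before_horizon_Suc_q, of q] S_nonneg[of q] by simp
  ultimately obtain k where k: "dl c = arrival k + dn" "start q + S q < arrival k"
    using Arr_if_arrives_late by (metis not_le)
  have "start (Suc q) \<le> arrival k" by (rule start_Suc_idle(2)[OF hq idle k(2)])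
  then show False using deadline_le_start_Suc_q k(1) dn_pos by linarith
qed

lemma finite_arrivals_before_deadline: "finite {k. t0 \<le> arrival k \<and> arrival k + dn \<le> dl c}"
proof (rule finite_subset[of _ "{..<K}"])
  show "{k. t0 \<le> arrival k \<and> arrival k + dn \<le> dl c} \<subseteq> {..<K}"
    using horizon Sb_nonneg dn_pos by (auto simp flip: arrival_less_iff)
qed auto

lemma busy_from_start_if_uninterrupted:
  assumes no_idle: "\<And>j. j < q \<Longrightarrow> start (Suc j) = start j + S j"
    and no_inversion: "\<And>j. j \<le> q \<Longrightarrow> dl (pick j) \<le> dl c"
  shows busy_from_start
proof -
  define W where "W = {c'. is_cust n c' \<and> dl c' \<le> dl c}"
  have "start q = (\<Sum>i<q. S i)"
    using start_sum[of 0 q] no_idle by (simp add: start_0 atLeast0LessThan)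
  then have work: "dl c \<le> (\<Sum>i<Suc q. S i)" using deadline_le_end_q by simp
  have "W \<subseteq> {c. is_cust n c \<and> arr c < arrival K}"
  proof
    fix x assume "x \<in> W"
    then have "is_cust n x" "arr x < dl c" using arr_time_less_deadline[of x] by (auto simp: W_def)
    then show "x \<in> {c. is_cust n c \<and> arr c < arrival K}" using horizon Sb_nonneg by simp
  qed
  then have "finite W" by (rule finite_subset[OF _ finite_customers_before])
  have "card {..<Suc q} + 1 \<le> card W"
  proof (rule card_insert_image_ge[OF inj_on_pick[OF before_horizon_Suc_q]])
    show "c \<in> W" using c_cust by (simp add: W_def)
    show "pick ` {..<Suc q} \<subseteq> W - {c}"
      using pick_waiting[OF before_horizon_Suc_q] no_inversion pick_ne_c
      by (auto simp: W_def avail_def less_Suc_eq_le)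
  qed fact
  then show ?thesis
    unfolding busy_from_start_def W_def using work q_less_J by (intro exI[of _ "Suc q"]) auto
qed

lemma busy_window_after_idle:
  assumes r: "r < q" "start (Suc r) \<noteq> start r + S r"
    and after: "\<And>j. r < j \<Longrightarrow> j \<le> q \<Longrightarrow> dl (pick j) \<le> dl c"
      "\<And>j. r < j \<Longrightarrow> j < q \<Longrightarrow> start (Suc j) = start j + S j"
  shows busy_window
proof -
  define e where "e = start r + S r"
  define t0 where "t0 = start (Suc r)"
  define W where "W = {k. t0 \<le> arrival k \<and> arrival k + dn \<le> dl c}"
  have he: "start r + S r < arrival K" using before_horizon_Suc_q r by (simp add: before_horizon_def)
  have e0: "0 \<le> e" using start_nonneg[OF before_horizon_Suc_q, of r] S_nonneg[of r] r by (simp add: e_def)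
  have restart: "\<And>k. e < arrival k \<Longrightarrow> t0 \<le> arrival k"
    using start_Suc_idle(2)[OF he r(2)] unfolding e_def t0_def .
  obtain kc where kc: "dl c = arrival kc + dn" "e < arrival kc"
    using Arr_if_arrives_late[OF e0 idle_before_arrival[OF r, folded e_def]] by metis
  have "start q = t0 + (\<Sum>i\<in>{Suc r..<q}. S i)"
    unfolding t0_def by (rule start_sum) (use r after in auto)
  then have work: "dl c - t0 \<le> (\<Sum>i\<in>{Suc r..<Suc r + (q - r)}. S i)"
    using deadline_le_end_q r by (simp add: sum.atLeastLessThan_Suc)
  have "pick ` {Suc r..q} \<subseteq> Arr ` W"
  proof
    fix x assume "x \<in> pick ` {Suc r..q}"
    then obtain j where j: "Suc r \<le> j" "j \<le> q" "x = pick j" by auto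
    have "e \<le> start (Suc r)" unfolding e_def by (rule start_Suc_ge[OF he])
    also have "start (Suc r) \<le> start j" using start_mono[OF before_horizon_Suc_q, of "Suc r" j] j by simp
    finally have ej: "e \<le> start j" .
    have "\<not> arr (pick j) \<le> e"
    proof
      assume "arr (pick j) \<le> e"
      then have "pick j \<in> waiting e (entered (Suc r))" using pick_waiting_earlier j(1,2) ej by blast
      then show False using start_Suc_idle(1)[OF he r(2)] by (simp add: e_def)
    qed
    then obtain k where "pick j = Arr k" "dl (pick j) = arrival k + dn" "e < arrival k"
      using Arr_if_arrives_late[OF e0] by (metis not_le)
    then show "x \<in> Arr ` W" using restart after(1)[of j] j by (auto simp: W_def)
  qed
  then have "card (pick ` {Suc r..q}) \<le> card (Arr ` W)"
    by (rule card_mono[rotated]) (simp add: W_def finite_arrivals_before_deadline)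
  moreover have "inj_on pick {Suc r..q}"
    by (rule inj_on_subset[OF inj_on_pick[OF before_horizon_Suc_q]]) auto
  moreover have "card (Arr ` W) = card W" by (rule card_image) (simp add: inj_on_def)
  ultimately have "q - r \<le> card W" by (simp add: card_image)
  moreover have "0 \<le> t0" unfolding t0_def using start_nonneg[OF before_horizon_Suc_q, of "Suc r"] r by simp
  moreover have "t0 + dn \<le> dl c" using restart kc by simp
  moreover have "Suc r + (q - r) \<le> J" using q_less_J r by simp
  ultimately show ?thesis unfolding busy_window_def W_def using work by blast
qed

lemma busy_window_after_inversion:
  assumes r: "r \<le> q" "dl c < dl (pick r)" "r < q \<Longrightarrow> start (Suc r) = start r + S r"
    and after: "\<And>j. r < j \<Longrightarrow> j \<le> q \<Longrightarrow> dl (pick j) \<le> dl c"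
      "\<And>j. r < j \<Longrightarrow> j < q \<Longrightarrow> start (Suc j) = start j + S j"
  shows busy_window
proof -
  define t0 where "t0 = start r"
  define W where "W = {k. t0 \<le> arrival k \<and> arrival k + dn \<le> dl c}"
  have t00: "0 \<le> t0" unfolding t0_def using start_nonneg[OF before_horizon_Suc_q, of r] r by simp
  have "\<not> arr c \<le> t0" using pick_deadline_if_c_arrived[of r] r unfolding t0_def by force
  then obtain kc where kc: "c = Arr kc" "dl c = arrival kc + dn" "t0 < arrival kc"
    using Arr_if_arrives_late[OF t00] by (metis not_le)
  have "start q = t0 + (\<Sum>i\<in>{r..<q}. S i)"
    unfolding t0_def by (rule start_sum) (use r after in \<open>auto simp: le_less\<close>)
  then have work: "dl c - t0 \<le> (\<Sum>i\<in>{r..<r + (Suc q - r)}. S i)"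
    using deadline_le_end_q r by (simp add: sum.atLeastLessThan_Suc Suc_diff_le)
  have "card {Suc r..q} + 1 \<le> card (Arr ` W)"
  proof (rule card_insert_image_ge)
    show "inj_on pick {Suc r..q}" by (rule inj_on_subset[OF inj_on_pick[OF before_horizon_Suc_q]]) auto
    show "c \<in> Arr ` W" using kc by (auto simp: W_def)
    show "finite (Arr ` W)" by (simp add: W_def finite_arrivals_before_deadline)
    show "pick ` {Suc r..q} \<subseteq> Arr ` W - {c}"
    proof
      fix x assume "x \<in> pick ` {Suc r..q}"
      then obtain j where j: "Suc r \<le> j" "j \<le> q" "x = pick j" by auto
      have "\<not> arr (pick j) \<le> t0"
      proof
        assume "arr (pick j) \<le> t0"
        then have "pick j \<in> waiting (start r) (entered r)"
          using pick_waiting_earlier[of r j] start_mono[OF before_horizon_Suc_q, of r j] j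
          unfolding t0_def by simp
        then have "dl (pick r) \<le> dl (pick j)" using pick_earliest[OF before_horizon_Suc_q] r by simp
        then show False using r(2) after(1)[of j] j by simp
      qed
      then obtain k where "pick j = Arr k" "dl (pick j) = arrival k + dn" "t0 < arrival k"
        using Arr_if_arrives_late[OF t00] by (metis not_le)
      then show "x \<in> Arr ` W - {c}" using after(1)[of j] j pick_ne_c by (auto simp: W_def)
    qed
  qed
  moreover have "card (Arr ` W) = card W" by (rule card_image) (simp add: inj_on_def)
  ultimately have "Suc q - r \<le> card W" using r by simp
  moreover have "t0 + dn \<le> dl c" using kc by simp
  moreover have "r + (Suc q - r) \<le> J" using q_less_J r by simp
  ultimately show ?thesis unfolding busy_window_def W_def using t00 work by blast
qed

text \<open>Look at the last service up to \<open>q\<close> that either is followed by idling or serves a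
  customer with a later deadline than \<open>c\<close>; from then on the server works without break for
  customers that arrived afterwards with deadlines no later than that of \<open>c\<close>.\<close>
lemma lost_customer_overload: "busy_from_start \<or> busy_window"
proof -
  define R where "R = {j. (j < q \<and> start (Suc j) \<noteq> start j + S j) \<or> (j \<le> q \<and> dl c < dl (pick j))}"
  show ?thesis
  proof (cases "R = {}")
    case True
    then have "\<And>j. j \<notin> R" by simp
    then have "busy_from_start"
      by (intro busy_from_start_if_uninterrupted) (auto simp: R_def not_less[symmetric])
    then show ?thesis ..
  next
    case False
    have "finite R" by (rule finite_subset[of _ "{..q}"]) (auto simp: R_def)
    define r where "r = Max R"
    have "r \<in> R" unfolding r_def using False \<open>finite R\<close> by (rule Max_in[rotated])
    moreover have "\<And>j. j \<in> R \<Longrightarrow> j \<le> r" unfolding r_def using \<open>finite R\<close> by simp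
    then have after: "\<And>j. r < j \<Longrightarrow> j \<le> q \<Longrightarrow> dl (pick j) \<le> dl c"
      "\<And>j. r < j \<Longrightarrow> j < q \<Longrightarrow> start (Suc j) = start j + S j"
      by (force simp: R_def)+
    ultimately consider "r < q" "start (Suc r) \<noteq> start r + S r"
      | "r \<le> q" "dl c < dl (pick r)" "r < q \<Longrightarrow> start (Suc r) = start r + S r"
      unfolding R_def by blast
    then have busy_window
      using busy_window_after_idle[OF _ _ after] busy_window_after_inversion[OF _ _ _ after]
      by cases blast+
    then show ?thesis ..
  qed
qed

context
  fixes T lam mu eta :: real
  assumes arrivals: "\<And>t0 x. 0 \<le> t0 \<Longrightarrow> t0 \<le> x \<Longrightarrow> x \<le> T \<Longrightarrow>
      real (card {k. t0 \<le> arrival k \<and> arrival k \<le> x}) \<le> lam * (x - t0) + eta"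
    and services: "\<And>u L. u + L \<le> J \<Longrightarrow> (\<Sum>j\<in>{u..<u+L}. S j) \<le> real L / mu + eta"
    and rates: "0 < mu" "mu < lam" "real n + mu * eta < mu * (real n * d)"
      "(lam - mu) * T + real n + eta * (1 + mu) \<le> lam * dn"
    and early: "dl c < T"
begin

lemma not_busy_from_start: "\<not> busy_from_start"
proof
  assume busy_from_start
  then obtain L where L: "L \<le> J" "L + 1 \<le> card {c'. is_cust n c' \<and> dl c' \<le> dl c}"
    "dl c \<le> (\<Sum>j<L. S j)"
    unfolding busy_from_start_def by blast
  have "dl c \<le> real L / mu + eta"
    using services[of 0 L] L(1,3) by (simp add: atLeast0LessThan)
  then have work: "mu * dl c \<le> real L + mu * eta" using rates(1) by (simp add: field_simps)
  have "dl c < arrival K + dn" using horizon Sb_nonneg dn_pos by simp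
  from card_deadline_le[OF this] L(2)
  have count: "L + 1 \<le> (if real n * d \<le> dl c then n + 1 else 0) + card {k. arrival k + dn \<le> dl c}"
    by linarith
  show False
  proof (cases "dl c < dn")
    case True
    then have "{k. arrival k + dn \<le> dl c} = {}" using arrival_pos by (auto simp: not_le add_strict_increasing)
    then have "real n * d \<le> dl c" "real L \<le> real n" using count by (auto split: if_splits)
    then show False using work rates(1,3) mult_left_mono[of "real n * d" "dl c" mu] by linarith
  next
    case False
    have "{k. arrival k + dn \<le> dl c} = {k. 0 \<le> arrival k \<and> arrival k \<le> dl c - dn}"
      using arrival_pos by (auto intro: less_imp_le)
    then have "real (card {k. arrival k + dn \<le> dl c}) \<le> lam * (dl c - dn) + eta"
      using arrivals[of 0 "dl c - dn"] False early dn_pos by simp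
    then have "real L \<le> real n + lam * (dl c - dn) + eta" using count by (auto split: if_splits)
    moreover have "(lam - mu) * dl c < (lam - mu) * T" using rates(2) early by simp
    ultimately show False using work rates(4) by (simp add: algebra_simps)
  qed
qed

lemma not_busy_window: "\<not> busy_window"
proof
  assume busy_window
  then obtain t0 u L where W: "0 \<le> t0" "t0 + dn \<le> dl c" "u + L \<le> J"
    "L \<le> card {k. t0 \<le> arrival k \<and> arrival k + dn \<le> dl c}" "dl c - t0 \<le> (\<Sum>j\<in>{u..<u+L}. S j)"
    unfolding busy_window_def by blast
  have "dl c - t0 \<le> real L / mu + eta" using W(5) services[OF W(3)] by simp
  then have work: "mu * (dl c - t0) \<le> real L + mu * eta" using rates(1) by (simp add: field_simps)
  have "{k. t0 \<le> arrival k \<and> arrival k + dn \<le> dl c} = {k. t0 \<le> arrival k \<and> arrival k \<le> dl c - dn}"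
    by auto
  then have "real L \<le> lam * (dl c - dn - t0) + eta"
    using W(1,2,4) arrivals[of t0 "dl c - dn"] early dn_pos by simp
  moreover have "mu * t0 \<le> lam * t0" using W(1) rates(2) by (simp add: mult_right_mono)
  moreover have "(lam - mu) * dl c < (lam - mu) * T" using rates(2) early by simp
  ultimately show False using work rates(4) by (simp add: algebra_simps)
qed

end

end

lemma (in edf_path) no_loss_before:
  assumes arrivals: "\<And>t0 x. 0 \<le> t0 \<Longrightarrow> t0 \<le> x \<Longrightarrow> x \<le> T \<Longrightarrow>
      real (card {k. t0 \<le> arrival k \<and> arrival k \<le> x}) \<le> lam * (x - t0) + eta"
    and services: "\<And>u L. u + L \<le> J \<Longrightarrow> (\<Sum>j\<in>{u..<u+L}. S j) \<le> real L / mu + eta"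
    and S_bound: "\<And>j. j \<le> J \<Longrightarrow> S j \<le> Sb" and horizon: "T + Sb \<le> arrival K"
    and J_large: "n + 1 + K \<le> J"
    and rates: "0 < mu" "mu < lam" "real n + mu * eta < mu * (real n * d)"
      "(lam - mu) * T + real n + eta * (1 + mu) \<le> lam * dn"
    and lost: "is_cust n c" "\<And>m. c \<notin> entered m"
  shows "T \<le> dl c"
proof (rule ccontr)
  assume "\<not> T \<le> dl c"
  then have early: "dl c < T" by simp
  interpret lost_customer n d dn A S c K J Sb
    using lost S_bound horizon early J_large by unfold_locales auto
  show False
    using lost_customer_overload not_busy_from_start[OF arrivals services rates early]
      not_busy_window[OF arrivals services rates early] by blast
qed

lemma (in edf_path) first_loss_ge:
  assumes "\<And>c. is_cust n c \<Longrightarrow> (\<And>m. c \<notin> entered m) \<Longrightarrow> T \<le> dl c"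
  shows "ereal T \<le> first_loss n d dn A S"
  unfolding first_loss_def
proof (rule Inf_greatest)
  fix y assume "y \<in> (\<lambda>c. ereal (dl c)) ` lost n d dn A S"
  then show "ereal T \<le> y" using assms by (auto simp: lost_def served_def entered_def)
qed

section \<open>Fluid bounds from partial sums on a grid\<close>

definition grid_close :: "(nat \<Rightarrow> real) \<Rightarrow> real \<Rightarrow> nat \<Rightarrow> nat \<Rightarrow> real \<Rightarrow> bool" where
  "grid_close X l w N a \<longleftrightarrow> (\<forall>i\<le>N. \<bar>(\<Sum>k\<le>i * w. X k) - (real (i * w) + 1) / l\<bar> < a)"

text \<open>Between two grid points the partial sums are monotone, while the mean moves by \<open>w / l\<close>.\<close>
lemma partial_sum_close_if_grid_close:
  assumes nonneg: "\<And>k. 0 \<le> X k" and grid: "grid_close X l w N a"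
    and w: "1 \<le> w" and l: "0 < l" and k: "k < N * w"
  shows "\<bar>(\<Sum>i\<le>k. X i) - (real k + 1) / l\<bar> \<le> real w / l + a"
proof -
  define P where "P k = (\<Sum>i\<le>k. X i)" for k
  have mono: "P k \<le> P k'" if "k \<le> k'" for k k'
    unfolding P_def using that nonneg by (intro sum_mono2) auto
  define i where "i = k div w"
  have lo: "i * w \<le> k" unfolding i_def by (simp add: div_times_less_eq_dividend)
  have "k = i * w + k mod w" "k mod w < w" using w unfolding i_def by simp_all
  then have hi: "k < (i + 1) * w" by (simp add: algebra_simps)
  have iN: "i + 1 \<le> N" using k w unfolding i_def by (simp add: div_less_iff_less_mult Suc_le_eq)
  have G: "\<bar>P (i' * w) - (real (i' * w) + 1) / l\<bar> \<le> a" if "i' \<le> N" for i'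
    using grid less_imp_le that unfolding grid_close_def P_def by blast
  note G1 = G[of i] and G2 = G[of "i + 1"]
  have "real (i * w) \<le> real k" "real k \<le> real ((i + 1) * w)"
    using lo less_imp_le[OF hi] by (simp_all only: of_nat_le_iff)
  moreover have "real ((i + 1) * w) = real (i * w) + real w" by (simp add: algebra_simps)
  ultimately have "(real k + 1) / l - real w / l \<le> (real (i * w) + 1) / l"
    "(real ((i + 1) * w) + 1) / l \<le> (real k + 1) / l + real w / l"
    using l by (simp_all add: divide_right_mono flip: diff_divide_distrib add_divide_distrib)
  then show ?thesis
    using mono[OF lo] mono[of k "(i + 1) * w"] hi G1 G2 iN unfolding P_def by (simp add: abs_le_iff)
qed

lemma prefix_sum_close_if_grid_close:
  assumes "\<And>k. 0 \<le> X k" "grid_close X l w N a" "1 \<le> w" "0 < l" "0 \<le> a" "j \<le> N * w"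
  shows "\<bar>(\<Sum>i<j. X i) - real j / l\<bar> \<le> real w / l + a"
proof (cases j)
  case (Suc k)
  then have "k < N * w" using assms(6) by simp
  from partial_sum_close_if_grid_close[OF assms(1-4) this]
  show ?thesis using Suc by (simp add: lessThan_Suc_atMost add.commute)
qed (use assms in simp)

lemma card_nat_in_real_interval:
  fixes N :: "nat set"
  assumes "\<And>k. k \<in> N \<Longrightarrow> a \<le> real k \<and> real k \<le> b"
  shows "real (card N) \<le> max 0 (b - a + 1)"
proof (cases "N = {}")
  case False
  then obtain k0 where k0: "k0 \<in> N" by auto
  have b0: "0 \<le> b" using assms[OF k0] by linarith
  have sub: "N \<subseteq> {nat \<lceil>a\<rceil>..nat \<lfloor>b\<rfloor>}"
  proof
    fix k assume "k \<in> N"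
    then have "a \<le> real k" "real k \<le> b" using assms by auto
    then show "k \<in> {nat \<lceil>a\<rceil>..nat \<lfloor>b\<rfloor>}" by (auto simp: le_nat_iff ceiling_le_iff le_floor_iff)
  qed
  then have "card N \<le> Suc (nat \<lfloor>b\<rfloor>) - nat \<lceil>a\<rceil>" using card_mono[OF _ sub] by simp
  moreover have "nat \<lceil>a\<rceil> \<le> nat \<lfloor>b\<rfloor>" using sub k0 by auto
  moreover have "real (nat \<lfloor>b\<rfloor>) \<le> b" using b0 by simp
  moreover have "a \<le> real (nat \<lceil>a\<rceil>)" by (simp add: real_nat_ceiling_ge)
  ultimately show ?thesis by (simp add: of_nat_diff)
qed simp

lemma card_times_in_interval_le:
  fixes P :: "nat \<Rightarrow> real"
  assumes close: "\<And>k. k < K \<Longrightarrow> \<bar>P k - (real k + 1) / l\<bar> \<le> e"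
    and below: "\<And>k. P k \<le> x \<Longrightarrow> k < K" and l: "0 < l" and e: "0 \<le> e" and "t0 \<le> x"
  shows "real (card {k. t0 \<le> P k \<and> P k \<le> x}) \<le> l * (x - t0) + 2 * l * e + 1"
proof -
  have "l * (t0 - e) - 1 \<le> real k \<and> real k \<le> l * (x + e) - 1"
    if "k \<in> {k. t0 \<le> P k \<and> P k \<le> x}" for k
  proof -
    have "\<bar>P k - (real k + 1) / l\<bar> \<le> e" using that below close by auto
    then have "t0 - e \<le> (real k + 1) / l" "(real k + 1) / l \<le> x + e" using that by auto
    then show ?thesis using l by (simp add: field_simps)
  qed
  then have "real (card {k. t0 \<le> P k \<and> P k \<le> x}) \<le> max 0 (l * (x + e) - 1 - (l * (t0 - e) - 1) + 1)"
    by (rule card_nat_in_real_interval)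
  also have "\<dots> = l * (x - t0) + 2 * l * e + 1"
  proof -
    have "0 \<le> l * (x - t0)" "0 \<le> l * e" using l e \<open>t0 \<le> x\<close> by simp_all
    then show ?thesis by (simp add: algebra_simps)
  qed
  finally show ?thesis .
qed

lemma block_sum_le:
  fixes X :: "nat \<Rightarrow> real"
  assumes close: "\<And>j. j \<le> M \<Longrightarrow> \<bar>(\<Sum>i<j. X i) - real j / l\<bar> \<le> e" and "u + L \<le> M"
  shows "(\<Sum>i\<in>{u..<u+L}. X i) \<le> real L / l + 2 * e"
proof -
  have "(\<Sum>i<u+L. X i) = (\<Sum>i<u. X i) + (\<Sum>i\<in>{u..<u+L}. X i)"
    by (simp add: atLeast0LessThan[symmetric] sum.atLeastLessThan_concat)
  moreover have "real (u + L) / l = real u / l + real L / l" by (simp add: add_divide_distrib)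
  ultimately show ?thesis using close[of "u + L"] close[of u] \<open>u + L \<le> M\<close> by (simp add: abs_le_iff)
qed

text \<open>Here \<open>e\<close> bounds the deviation of arrival times and service sums from their means up to the
  last arrival \<open>K = N w - 1\<close> and the last service \<open>J = n + N w\<close> controlled by the grids, and
  \<open>eta\<close> is the resulting error in the fluid bounds of \<open>no_loss_before\<close>.\<close>
lemma (in edf_path) first_loss_ge_if_grid_close:
  fixes lam mu a tau :: real and w N :: nat
  assumes rates_pos: "0 < lam" "0 < mu" and w: "1 \<le> w" and a: "0 \<le> a"
    and gridA: "grid_close A lam w N a" and gridS: "grid_close S mu w (2 * N + 1) a"
  defines "e \<equiv> a + real w / lam + real w / mu"
  defines "eta \<equiv> 2 * lam * e + 2 * e + 1"
  assumes grid_large: "n + 1 \<le> N * w" "real n * tau + 1 / mu + 3 * e \<le> real (N * w) / lam"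
    and rates: "mu < lam" "real n + mu * eta < mu * (real n * d)"
      "(lam - mu) * (real n * tau) + real n + eta * (1 + mu) \<le> lam * dn"
  shows "ereal (real n * tau) \<le> first_loss n d dn A S"
proof -
  define K where "K = N * w - 1"
  define J where "J = n + N * w"
  define Sb where "Sb = 1 / mu + 2 * e"
  have e0: "0 \<le> e" unfolding e_def using a rates_pos by simp
  have w_rates: "0 \<le> real w / lam" "0 \<le> real w / mu" using rates_pos by simp_all
  then have closeA: "\<bar>arrival k - (real k + 1) / lam\<bar> \<le> e" if "k < N * w" for k
    using partial_sum_close_if_grid_close[OF less_imp_le[OF A_pos] gridA w rates_pos(1) that]
    unfolding e_def arrival_def by simp
  have closeS: "\<bar>(\<Sum>i<j. S i) - real j / mu\<bar> \<le> e" if "j \<le> (2 * N + 1) * w" for j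
    using prefix_sum_close_if_grid_close[OF S_nonneg gridS w rates_pos(2) a that] w_rates
    unfolding e_def by simp
  have J_grid: "J + 1 \<le> (2 * N + 1) * w" using grid_large(1) unfolding J_def by (simp add: algebra_simps)
  have services: "(\<Sum>j\<in>{u..<u+L}. S j) \<le> real L / mu + eta" if "u + L \<le> J" for u L
  proof -
    have "0 \<le> lam * e" using e0 rates_pos by simp
    then show ?thesis
      using block_sum_le[where M = "(2 * N + 1) * w", OF closeS, where u = u and L = L] that J_grid
      unfolding eta_def by simp
  qed
  have S_bound: "S j \<le> Sb" if "j \<le> J" for j
    using block_sum_le[where M = "(2 * N + 1) * w", OF closeS, where u = j and L = 1] that J_grid unfolding Sb_def by simp
  have "K < N * w" "K + 1 = N * w" using grid_large(1) unfolding K_def by auto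
  then have K: "K < N * w" "real K + 1 = real (N * w)" by (simp, metis of_nat_1 of_nat_add)
  have "real (N * w) / lam - e \<le> arrival K" using closeA[OF K(1)] unfolding K(2) by (simp add: abs_le_iff)
  then have horizon: "real n * tau + Sb \<le> arrival K" using grid_large(2) unfolding Sb_def by simp
  have Sb_pos: "0 < Sb" unfolding Sb_def using rates_pos e0 by (simp add: add_pos_nonneg)
  have arrivals: "real (card {k. t0 \<le> arrival k \<and> arrival k \<le> x}) \<le> lam * (x - t0) + eta"
    if "0 \<le> t0" "t0 \<le> x" "x \<le> real n * tau" for t0 x
  proof -
    have "k < K" if "arrival k \<le> x" for k
      using that \<open>x \<le> real n * tau\<close> horizon Sb_pos by (simp flip: arrival_less_iff)
    then have "k < N * w" if "arrival k \<le> x" for k using that K(1) by fastforce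
    with closeA have "real (card {k. t0 \<le> arrival k \<and> arrival k \<le> x}) \<le> lam * (x - t0) + 2 * lam * e + 1"
      by (rule card_times_in_interval_le[OF _ _ rates_pos(1) e0 \<open>t0 \<le> x\<close>])
    then show ?thesis unfolding eta_def using e0 by simp
  qed
  show ?thesis
  proof (rule first_loss_ge)
    fix c assume "is_cust n c" "\<And>m. c \<notin> entered m"
    then show "real n * tau \<le> dl c"
      using no_loss_before[OF arrivals services S_bound horizon _ rates_pos(2) rates] grid_large(1)
      unfolding J_def K_def by simp
  qed
qed

section \<open>Choice of the fluid parameters\<close>

lemma eventually_less_of_tendsto:
  fixes f g :: "'a \<Rightarrow> real"
  assumes "(f \<longlongrightarrow> a) F" "(g \<longlongrightarrow> b) F" "a < b"
  shows "\<forall>\<^sub>F x in F. f x < g x"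
proof -
  have "((\<lambda>x. g x - f x) \<longlongrightarrow> b - a) F" by (intro tendsto_intros assms)
  then have "\<forall>\<^sub>F x in F. 0 < g x - f x" using assms(3) by (intro order_tendstoD(1)) auto
  then show ?thesis by eventually_elim simp
qed

text \<open>The hypotheses of \<open>first_loss_ge_if_grid_close\<close> divided by \<open>n\<close>: \<open>omega\<close>, \<open>delta\<close>
  and \<open>iota\<close> stand for \<open>w / n\<close>, \<open>dn / n\<close> and \<open>1 / n\<close>, and \<open>theta * n\<close> is the tolerance of
  the grids.\<close>
definition fluid_margins ::
    "real \<Rightarrow> real \<Rightarrow> nat \<Rightarrow> real \<Rightarrow> real \<Rightarrow> real \<Rightarrow> real \<Rightarrow> real \<Rightarrow> real \<Rightarrow> bool" where
  "fluid_margins tau theta N d lam mu omega delta iota \<longleftrightarrow>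
    (let e = theta + omega / lam + omega / mu; eta = 2 * lam * e + 2 * e + iota in
      1 + iota < real N * omega \<and> tau + iota / mu + 3 * e < real N * omega / lam \<and>
      0 < mu \<and> mu < lam \<and> 1 + mu * eta < mu * d \<and>
      (lam - mu) * tau + 1 + eta * (1 + mu) < lam * delta)"

lemma eventually_fluid_margins:
  assumes lim: "fluid_margins tau theta N d lam0 mu0 theta d 0"
    and conv: "lam \<longlonglongrightarrow> lam0" "mu \<longlonglongrightarrow> mu0" "omega \<longlonglongrightarrow> theta" "delta \<longlonglongrightarrow> d" "iota \<longlonglongrightarrow> 0"
  shows "\<forall>\<^sub>F n in sequentially.
    fluid_margins tau theta N d (lam n) (mu n) (omega n) (delta n) (iota n)"
proof -
  have "0 < mu0" "mu0 < lam0" using lim by (simp_all add: fluid_margins_def Let_def)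
  then have nz: "lam0 \<noteq> 0" "mu0 \<noteq> 0" by simp_all
  show ?thesis
    using lim unfolding fluid_margins_def Let_def
    by (elim conjE, intro eventually_conj)
      (rule eventually_less_of_tendsto, (rule tendsto_intros conv nz)+, assumption)+
qed

lemma fluid_margins_exist:
  assumes "0 < mu0" "mu0 < lam0" "1 < mu0 * d" "(lam0 - mu0) * tau + 1 < lam0 * d"
  obtains theta N where "0 < theta" "fluid_margins tau theta N d lam0 mu0 theta d 0"
proof -
  define c where "c = 1 + 1 / lam0 + 1 / mu0"
  define eta where "eta theta = 2 * lam0 * (theta * c) + 2 * (theta * c)" for theta
  have "\<forall>\<^sub>F theta in at_right 0. 1 + mu0 * eta theta < mu0 * d"
    unfolding eta_def by (rule eventually_less_of_tendsto, (rule tendsto_intros)+) (simp add: assms(3))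
  moreover have "\<forall>\<^sub>F theta in at_right 0. (lam0 - mu0) * tau + 1 + eta theta * (1 + mu0) < lam0 * d"
    unfolding eta_def by (rule eventually_less_of_tendsto, (rule tendsto_intros)+) (simp add: assms(4))
  ultimately have "\<forall>\<^sub>F theta in at_right 0. 0 < theta \<and> 1 + mu0 * eta theta < mu0 * d \<and>
      (lam0 - mu0) * tau + 1 + eta theta * (1 + mu0) < lam0 * d"
    using eventually_at_right_less[of 0] by eventually_elim simp
  then obtain theta where theta: "0 < theta" "1 + mu0 * eta theta < mu0 * d"
      "(lam0 - mu0) * tau + 1 + eta theta * (1 + mu0) < lam0 * d"
    using eventually_happens[of _ "at_right (0::real)"] by auto
  have c0: "0 < c" unfolding c_def using assms(1,2) by (simp add: add_pos_pos)
  obtain N where N: "(lam0 * (\<bar>tau\<bar> + 3 * (theta * c)) + 1) / theta < real N"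
    using reals_Archimedean2 by blast
  then have "lam0 * \<bar>tau\<bar> + 3 * lam0 * theta * c + 1 < real N * theta"
    using theta(1) by (simp add: pos_divide_less_eq algebra_simps)
  moreover have "0 \<le> lam0 * \<bar>tau\<bar>" "0 \<le> 3 * lam0 * theta * c" "lam0 * tau \<le> lam0 * \<bar>tau\<bar>"
    using assms(1,2) theta(1) c0 by simp_all
  ultimately have "1 < real N * theta" "(tau + 3 * (theta * c)) * lam0 < real N * theta"
    by (simp_all add: algebra_simps)
  then have "1 < real N * theta" "tau + 3 * (theta * c) < real N * theta / lam0"
    using assms(1,2) by (simp_all add: pos_less_divide_eq)
  moreover have "theta + theta / lam0 + theta / mu0 = theta * c" unfolding c_def by (simp add: field_simps)
  ultimately have "fluid_margins tau theta N d lam0 mu0 theta d 0"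
    using theta assms(1,2) unfolding fluid_margins_def Let_def eta_def by simp
  with theta(1) show ?thesis by (rule that)
qed

lemma fluid_margins_below_loss_time:
  assumes "0 < d" "1 / d < mu0" "mu0 < lam0"
    and "tau < ((lam0 / mu0) * d - 1 / mu0) / (lam0 / mu0 - 1)"
  obtains theta N where "0 < theta" "fluid_margins tau theta N d lam0 mu0 theta d 0"
proof (rule fluid_margins_exist)
  show mu0: "0 < mu0" using assms(1,2) by (meson divide_pos_pos less_trans zero_less_one)
  show "mu0 < lam0" "1 < mu0 * d" using assms(1-3) by (simp_all add: field_simps)
  have "((lam0 / mu0) * d - 1 / mu0) / (lam0 / mu0 - 1) = (lam0 * d - 1) / (lam0 - mu0)"
    using mu0 assms(3) by (simp add: field_simps)
  with assms(4) have "tau < (lam0 * d - 1) / (lam0 - mu0)" by (simp only:)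
  then show "(lam0 - mu0) * tau + 1 < lam0 * d" using assms(3) by (simp add: pos_less_divide_eq mult.commute)
qed

lemma (in edf_path) first_loss_ge_if_fluid_margins:
  fixes lam mu theta tau :: real and w N :: nat
  assumes w: "1 \<le> w" and theta: "0 \<le> theta"
    and gridA: "grid_close A lam w N (theta * real n)"
    and gridS: "grid_close S mu w (2 * N + 1) (theta * real n)"
    and margins: "fluid_margins tau theta N d lam mu (real w / real n) (dn / real n) (1 / real n)"
  shows "ereal (real n * tau) \<le> first_loss n d dn A S"
proof -
  have n: "0 < real n" using init_deadline_pos by (cases "n = 0") auto
  define e where "e = theta * real n + real w / lam + real w / mu"
  define eta where "eta = 2 * lam * e + 2 * e + 1"
  have scaled: "theta + real w / real n / lam + real w / real n / mu = e / real n"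
    "2 * lam * (e / real n) + 2 * (e / real n) + 1 / real n = eta / real n"
    using n by (simp_all add: e_def eta_def field_simps)
  have m: "1 + 1 / real n < real N * (real w / real n)"
    "tau + 1 / real n / mu + 3 * (e / real n) < real N * (real w / real n) / lam"
    "0 < mu" "mu < lam" "1 + mu * (eta / real n) < mu * d"
    "(lam - mu) * tau + 1 + eta / real n * (1 + mu) < lam * (dn / real n)"
    using margins unfolding fluid_margins_def Let_def scaled by auto
  have "1 + 1 / real n < real (N * w) / real n" using m(1) by simp
  then have "(1 + 1 / real n) * real n < real (N * w)" by (simp only: pos_less_divide_eq[OF n])
  then have "real n + 1 < real (N * w)" using n by (simp add: distrib_right)
  then have G1: "n + 1 \<le> N * w" by linarith
  have G2: "real n * tau + 1 / mu + 3 * e \<le> real (N * w) / lam"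
    using m(2) n by (simp add: field_simps)
  have C1: "real n + mu * eta < mu * (real n * d)" using m(5) n by (simp add: field_simps)
  have "((lam - mu) * (real n * tau) + real n + eta * (1 + mu)) / real n
      = (lam - mu) * tau + 1 + eta / real n * (1 + mu)"
    using n by (simp add: field_simps)
  from m(6)[folded this] have C2: "(lam - mu) * (real n * tau) + real n + eta * (1 + mu) \<le> lam * dn"
    using n by (simp add: divide_less_cancel)
  show ?thesis
    using first_loss_ge_if_grid_close[OF _ m(3) w _ gridA gridS] G1 G2 C1 C2 m(3,4) n theta
    unfolding eta_def e_def by simp
qed

section \<open>Probability estimates\<close>

lemma (in prob_space) indep_sets_reindex:
  assumes ind: "indep_sets F (f ` I)" and inj: "inj_on f I"
  shows "indep_sets (\<lambda>i. F (f i)) I"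
  unfolding indep_sets_def
proof (intro conjI ballI allI impI)
  fix i assume "i \<in> I"
  then show "F (f i) \<subseteq> events" using ind by (auto simp: indep_sets_def)
next
  fix J A assume J: "J \<subseteq> I" "J \<noteq> {}" "finite J" and A: "A \<in> Pi J (\<lambda>i. F (f i))"
  define A' where "A' = (\<lambda>y. A (the_inv_into J f y))"
  have injJ: "inj_on f J" using inj J(1) by (rule inj_on_subset)
  have A'f: "\<And>j. j \<in> J \<Longrightarrow> A' (f j) = A j" unfolding A'_def using injJ by (simp add: the_inv_into_f_f)
  have "A' \<in> Pi (f ` J) F" using A A'f by auto
  then have "prob (\<Inter>y\<in>f ` J. A' y) = (\<Prod>y\<in>f ` J. prob (A' y))"
    using ind J unfolding indep_sets_def by (metis finite_imageI image_is_empty image_mono)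
  moreover have "(\<Inter>y\<in>f ` J. A' y) = (\<Inter>j\<in>J. A j)" using A'f by auto
  moreover have "(\<Prod>y\<in>f ` J. prob (A' y)) = (\<Prod>j\<in>J. prob (A j))"
    using injJ A'f by (simp add: prod.reindex)
  ultimately show "prob (\<Inter>j\<in>J. A j) = (\<Prod>j\<in>J. prob (A j))" by simp
qed

lemma (in prob_space) indep_vars_reindex:
  assumes ind: "indep_vars M' X (f ` I)" and inj: "inj_on f I"
  shows "indep_vars (\<lambda>i. M' (f i)) (\<lambda>i. X (f i)) I"
  using ind unfolding indep_vars_def2
  by (auto intro: indep_sets_reindex[OF _ inj, where F = "\<lambda>i. {X i -` A \<inter> space M |A. A \<in> sets (M' i)}", simplified])

lemma (in prob_space) prob_erlang_deviation_le:
  assumes ind: "indep_vars (\<lambda>_. borel) X {..k}"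
    and dist: "\<And>i. distributed M lborel (X i) (exponential_density l)"
    and l: "0 < l" and a: "0 < a"
  shows "prob {x\<in>space M. a \<le> \<bar>(\<Sum>i\<le>k. X i x) - (real k + 1) / l\<bar>} \<le> (real k + 1) / (l^2 * a^2)"
proof -
  have D: "distributed M lborel (\<lambda>x. \<Sum>i\<in>{..k}. X i x) (erlang_density (card {..k} - 1) l)"
    by (rule exponential_distributed_sum) (use ind dist l in auto)
  then have D': "distributed M lborel (\<lambda>x. \<Sum>i\<le>k. X i x) (erlang_density k l)" by simp
  have rv: "random_variable borel (\<lambda>x. \<Sum>i\<le>k. X i x)"
    using distributed_measurable[OF D'] by simp
  have int2: "integrable M (\<lambda>x. (\<Sum>i\<le>k. X i x) ^ 2)"
    by (rule erlang_ith_moment_integrable[OF l D'])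
  have ex: "expectation (\<lambda>x. \<Sum>i\<le>k. X i x) = (real k + 1) / l"
    using erlang_ith_moment[OF l D', of 1] by (simp add: add.commute)
  have var: "variance (\<lambda>x. \<Sum>i\<le>k. X i x) = (real k + 1) / l^2"
    using erlang_distributed_variance[OF l D'] by (simp add: add.commute)
  have "prob {x\<in>space M. \<bar>(\<Sum>i\<le>k. X i x) - expectation (\<lambda>x. \<Sum>i\<le>k. X i x)\<bar> \<ge> a}
      \<le> variance (\<lambda>x. \<Sum>i\<le>k. X i x) / a^2"
    by (rule Chebyshev_inequality[OF rv int2 a])
  then show ?thesis using ex var by (simp add: field_simps)
qed

lemma (in prob_space) prob_not_grid_close_le:
  assumes ind: "indep_vars (\<lambda>_. borel) X UNIV"
    and dist: "\<And>i. distributed M lborel (X i) (exponential_density l)"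
    and l: "0 < l" and a: "0 < a"
  shows "prob {x \<in> space M. \<not> grid_close (\<lambda>k. X k x) l w N a}
    \<le> real (N + 1) * (real N * real w + 1) / (l\<^sup>2 * a\<^sup>2)"
proof -
  have [measurable]: "X k \<in> borel_measurable M" for k
    using distributed_measurable[OF dist] by simp
  define B where "B i = {x \<in> space M. a \<le> \<bar>(\<Sum>k\<le>i * w. X k x) - (real (i * w) + 1) / l\<bar>}" for i
  have bound: "prob (B i) \<le> (real N * real w + 1) / (l\<^sup>2 * a\<^sup>2)" if "i \<le> N" for i
  proof -
    have "prob (B i) \<le> (real (i * w) + 1) / (l\<^sup>2 * a\<^sup>2)" unfolding B_def
      by (rule prob_erlang_deviation_le[OF indep_vars_subset[OF ind] dist l a]) auto
    also have "\<dots> \<le> (real N * real w + 1) / (l\<^sup>2 * a\<^sup>2)"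
      using that l a by (intro divide_right_mono) (auto intro: mult_right_mono)
    finally show ?thesis .
  qed
  have "{x \<in> space M. \<not> grid_close (\<lambda>k. X k x) l w N a} = (\<Union>i\<le>N. B i)"
    by (auto simp: grid_close_def B_def not_less)
  moreover have "B i \<in> events" for i unfolding B_def by measurable
  ultimately have "prob {x \<in> space M. \<not> grid_close (\<lambda>k. X k x) l w N a} \<le> (\<Sum>i\<le>N. prob (B i))"
    by (simp add: measure_UNION_le)
  also have "\<dots> \<le> real (card {..N}) * ((real N * real w + 1) / (l\<^sup>2 * a\<^sup>2))"
    by (rule sum_bounded_above) (simp add: bound)
  also have "\<dots> = real (N + 1) * (real N * real w + 1) / (l\<^sup>2 * a\<^sup>2)" by simp
  finally show ?thesis .
qed

lemma (in prob_space) AE_exponential_pos: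
  fixes X :: "nat \<Rightarrow> 'a \<Rightarrow> real"
  assumes "\<And>i. distributed M lborel (X i) (exponential_density l)" and "0 < l"
  shows "AE x in M. \<forall>i. 0 < X i x"
proof -
  show ?thesis unfolding AE_all_countable
  proof
    fix i
    have "prob {x \<in> space M. 0 < X i x} = 1"
      using exponential_distributedD_gt[OF assms(1) _ assms(2), of 0] by simp
    from AE_prob_1[OF this] show "AE x in M. 0 < X i x" by eventually_elim auto
  qed
qed

lemma (in prob_space) prob_bad_paths_le:
  fixes A S :: "nat \<Rightarrow> 'a \<Rightarrow> real" and w N :: nat
  assumes indep: "indep_vars (\<lambda>_. borel) (\<lambda>i. case i of Inl k \<Rightarrow> A k | Inr m \<Rightarrow> S m) UNIV"
    and distA: "\<And>k. distributed M lborel (A k) (exponential_density lam)"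
    and distS: "\<And>m. distributed M lborel (S m) (exponential_density mu)"
    and rates: "0 < lam" "0 < mu" and a: "0 < a"
  defines "good x \<equiv> (\<forall>k. 0 < A k x) \<and> (\<forall>m. 0 < S m x) \<and>
    grid_close (\<lambda>k. A k x) lam w N a \<and> grid_close (\<lambda>m. S m x) mu w (2 * N + 1) a"
  shows "{x \<in> space M. \<not> good x} \<in> events"
    and "prob {x \<in> space M. \<not> good x}
      \<le> real (N + 1) * (real N * real w + 1) / (lam\<^sup>2 * a\<^sup>2)
        + real (2 * N + 2) * (real (2 * N + 1) * real w + 1) / (mu\<^sup>2 * a\<^sup>2)"
proof -
  have [measurable]: "A k \<in> borel_measurable M" "S k \<in> borel_measurable M" for k
    using distributed_measurable[OF distA] distributed_measurable[OF distS] by simp_all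
  have indA: "indep_vars (\<lambda>_. borel) A UNIV"
    using indep_vars_reindex[OF indep_vars_subset[OF indep, of "Inl ` UNIV"]] by (simp add: inj_on_def)
  have indS: "indep_vars (\<lambda>_. borel) S UNIV"
    using indep_vars_reindex[OF indep_vars_subset[OF indep, of "Inr ` UNIV"]] by (simp add: inj_on_def)
  define Z where "Z = {x \<in> space M. \<not> ((\<forall>k. 0 < A k x) \<and> (\<forall>m. 0 < S m x))}"
  define BA where "BA = {x \<in> space M. \<not> grid_close (\<lambda>k. A k x) lam w N a}"
  define BS where "BS = {x \<in> space M. \<not> grid_close (\<lambda>m. S m x) mu w (2 * N + 1) a}"
  have sets: "Z \<in> events" "BA \<in> events" "BS \<in> events"
    unfolding Z_def BA_def BS_def grid_close_def by measurable
  have "AE x in M. (\<forall>k. 0 < A k x) \<and> (\<forall>m. 0 < S m x)"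
    using AE_exponential_pos[OF distA rates(1)] AE_exponential_pos[OF distS rates(2)] by eventually_elim simp
  then have Z_null: "Z \<in> null_sets M"
    using AE_iff_null[of M "\<lambda>x. (\<forall>k. 0 < A k x) \<and> (\<forall>m. 0 < S m x)"] sets(1)
    unfolding Z_def by simp
  have bad: "{x \<in> space M. \<not> good x} = (BA \<union> BS) \<union> Z" by (auto simp: good_def Z_def BA_def BS_def)
  then show "{x \<in> space M. \<not> good x} \<in> events" using sets by simp
  have "prob {x \<in> space M. \<not> good x} = prob (BA \<union> BS)"
    unfolding bad by (rule measure_Un_null_set[OF _ Z_null]) (use sets in auto)
  also have "\<dots> \<le> prob BA + prob BS" using sets by (intro measure_Un_le) auto
  also have "\<dots> \<le> real (N + 1) * (real N * real w + 1) / (lam\<^sup>2 * a\<^sup>2)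
        + real (2 * N + 2) * (real (2 * N + 1) * real w + 1) / (mu\<^sup>2 * a\<^sup>2)"
    using prob_not_grid_close_le[OF indA distA rates(1) a, of w N]
      prob_not_grid_close_le[OF indS distS rates(2) a, of w "2 * N + 1"]
    unfolding BA_def BS_def by (intro add_mono) simp_all
  finally show "prob {x \<in> space M. \<not> good x} \<le> \<dots>" .
qed

lemma prob_scaled_first_loss_le:
  fixes M :: "'a measure" and A S :: "nat \<Rightarrow> 'a \<Rightarrow> real" and w N :: nat
  assumes "prob_space M"
    and indep: "prob_space.indep_vars M (\<lambda>_. borel) (\<lambda>i. case i of Inl k \<Rightarrow> A k | Inr m \<Rightarrow> S m) UNIV"
    and distA: "\<And>k. distributed M lborel (A k) (exponential_density lam)"
    and distS: "\<And>m. distributed M lborel (S m) (exponential_density mu)"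
    and pos: "0 < lam" "0 < mu" "0 < dn" "0 < real n * d" and theta: "0 < theta" and w: "1 \<le> w"
    and margins: "fluid_margins tau theta N d lam mu (real w / real n) (dn / real n) (1 / real n)"
    and "y < tau"
  shows "\<exists>F\<in>sets M.
    {x \<in> space M. first_loss n d dn (\<lambda>k. A k x) (\<lambda>m. S m x) / ereal (real n) \<le> ereal y} \<subseteq> F \<and>
    measure M F \<le> real (N + 1) * (real N * real w + 1) / (lam\<^sup>2 * (theta * real n)\<^sup>2)
      + real (2 * N + 2) * (real (2 * N + 1) * real w + 1) / (mu\<^sup>2 * (theta * real n)\<^sup>2)"
proof -
  interpret prob_space M by fact
  have n: "0 < real n" using pos(4) by (cases "n = 0") auto
  let ?bad = "{x \<in> space M. \<not> ((\<forall>k. 0 < A k x) \<and> (\<forall>m. 0 < S m x) \<and>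
    grid_close (\<lambda>k. A k x) lam w N (theta * real n) \<and>
    grid_close (\<lambda>m. S m x) mu w (2 * N + 1) (theta * real n))}"
  note bad = prob_bad_paths_le[OF indep distA distS pos(1,2), of "theta * real n" w N]
  have "\<not> first_loss n d dn (\<lambda>k. A k x) (\<lambda>m. S m x) / ereal (real n) \<le> ereal y"
    if "(\<forall>k. 0 < A k x) \<and> (\<forall>m. 0 < S m x) \<and> grid_close (\<lambda>k. A k x) lam w N (theta * real n) \<and>
      grid_close (\<lambda>m. S m x) mu w (2 * N + 1) (theta * real n)" for x
  proof -
    interpret edf_path n d dn "\<lambda>k. A k x" "\<lambda>m. S m x"
      using that pos by unfold_locales (auto intro: less_imp_le)
    have early: "ereal (real n * tau) \<le> first_loss n d dn (\<lambda>k. A k x) (\<lambda>m. S m x)"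
      using first_loss_ge_if_fluid_margins[OF w _ _ _ margins] that theta by simp
    show ?thesis
    proof
      assume "first_loss n d dn (\<lambda>k. A k x) (\<lambda>m. S m x) / ereal (real n) \<le> ereal y"
      then have "first_loss n d dn (\<lambda>k. A k x) (\<lambda>m. S m x) \<le> ereal (real n * y)"
        using n by (simp add: ereal_divide_le_pos)
      with early have "ereal (real n * tau) \<le> ereal (real n * y)" by (rule order_trans)
      then have "real n * tau \<le> real n * y" by simp
      then show False using n \<open>y < tau\<close> by simp
    qed
  qed
  then have "{x \<in> space M. first_loss n d dn (\<lambda>k. A k x) (\<lambda>m. S m x) / ereal (real n) \<le> ereal y}
      \<subseteq> ?bad"
    by blast
  with bad theta n show ?thesis by (intro bexI[of _ ?bad] conjI) auto
qed

lemma tendsto_ceiling_ratio: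
  assumes "0 \<le> theta"
  shows "(\<lambda>n. real (nat \<lceil>theta * real n\<rceil>) / real n) \<longlonglongrightarrow> theta"
proof (rule tendsto_sandwich[of "\<lambda>n. theta" _ _ "\<lambda>n. theta + 1 / real n"])
  show "\<forall>\<^sub>F n in sequentially. theta \<le> real (nat \<lceil>theta * real n\<rceil>) / real n"
    using eventually_ge_at_top[of 1]
    by eventually_elim (simp add: pos_le_divide_eq real_nat_ceiling_ge)
  show "\<forall>\<^sub>F n in sequentially. real (nat \<lceil>theta * real n\<rceil>) / real n \<le> theta + 1 / real n"
    using eventually_ge_at_top[of 1]
  proof eventually_elim
    case (elim n)
    have "real (nat \<lceil>theta * real n\<rceil>) = of_int \<lceil>theta * real n\<rceil>" using assms by simp
    also have "\<dots> \<le> theta * real n + 1" by (rule of_int_ceiling_le_add_one)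
    finally show ?case using elim by (simp add: pos_divide_le_eq distrib_right)
  qed
  show "(\<lambda>n. theta + 1 / real n) \<longlonglongrightarrow> theta"
    using tendsto_add[OF tendsto_const lim_inverse_n'] by simp
qed simp

lemma tendsto_grid_bound:
  fixes lam :: "nat \<Rightarrow> real" and w :: "nat \<Rightarrow> nat"
  assumes lam: "lam \<longlonglongrightarrow> lam0" "lam0 \<noteq> 0"
    and w: "(\<lambda>n. real (w n) / real n) \<longlonglongrightarrow> theta" and theta: "theta \<noteq> 0"
  shows "(\<lambda>n. c * (real K * real (w n) + 1) / ((lam n)\<^sup>2 * (theta * real n)\<^sup>2)) \<longlonglongrightarrow> 0"
proof -
  have "(\<lambda>n. 1 / real n * (c * (real K * (real (w n) / real n) + 1 / real n) / ((lam n)\<^sup>2 * theta\<^sup>2)))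
      \<longlonglongrightarrow> 0 * (c * (real K * theta + 0) / (lam0\<^sup>2 * theta\<^sup>2))"
    by (intro tendsto_intros lam w lim_inverse_n') (simp add: lam theta)
  moreover have "\<forall>\<^sub>F n in sequentially.
      1 / real n * (c * (real K * (real (w n) / real n) + 1 / real n) / ((lam n)\<^sup>2 * theta\<^sup>2))
      = c * (real K * real (w n) + 1) / ((lam n)\<^sup>2 * (theta * real n)\<^sup>2)"
    using eventually_ge_at_top[of 1] by eventually_elim (simp add: field_simps power2_eq_square)
  ultimately show ?thesis by (simp add: Lim_transform_eventually)
qed

lemma vanishing_cover:
  fixes M :: "nat \<Rightarrow> 'a measure" and P :: "nat \<Rightarrow> 'a set"
  assumes cover: "\<forall>\<^sub>F n in sequentially. \<exists>F\<in>sets (M n). P n \<subseteq> F \<and> measure (M n) F \<le> b n"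
    and b: "b \<longlonglongrightarrow> 0" and P: "\<And>n. P n \<subseteq> space (M n)"
  shows "\<exists>E. (\<forall>n\<ge>1. E n \<in> sets (M n) \<and> P n \<subseteq> E n) \<and> (\<lambda>n. measure (M n) (E n)) \<longlonglongrightarrow> 0"
proof -
  obtain n0 where "\<And>n. n0 \<le> n \<Longrightarrow> \<exists>F\<in>sets (M n). P n \<subseteq> F \<and> measure (M n) F \<le> b n"
    using cover by (auto simp: eventually_sequentially)
  then obtain F where F: "\<And>n. n0 \<le> n \<Longrightarrow> F n \<in> sets (M n) \<and> P n \<subseteq> F n \<and> measure (M n) (F n) \<le> b n"
    by metis
  define E where "E n = (if n0 \<le> n then F n else space (M n))" for n
  have "\<forall>\<^sub>F n in sequentially. norm (measure (M n) (E n)) \<le> b n"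
    using eventually_ge_at_top[of n0] by eventually_elim (simp add: E_def F)
  then have "(\<lambda>n. measure (M n) (E n)) \<longlonglongrightarrow> 0" using b by (rule Lim_null_comparison)
  then show ?thesis using F P by (intro exI[of _ E]) (auto simp: E_def)
qed

theorem mainTheorem5:
  fixes M :: "nat \<Rightarrow> 'a measure"
    and A S :: "nat \<Rightarrow> nat \<Rightarrow> 'a \<Rightarrow> real"
    and lam mu dn :: "nat \<Rightarrow> real"
    and lam0 mu0 d \<xi> :: real
  assumes ps: "\<And>n. n \<ge> 1 \<Longrightarrow> prob_space (M n)"
    and indep: "\<And>n. n \<ge> 1 \<Longrightarrow> prob_space.indep_vars (M n) (\<lambda>_. borel)
                   (\<lambda>i. case i of Inl k \<Rightarrow> A n k | Inr m \<Rightarrow> S n m) UNIV"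
    and distA: "\<And>n k. n \<ge> 1 \<Longrightarrow> distributed (M n) lborel (A n k) (exponential_density (lam n))"
    and distS: "\<And>n m. n \<ge> 1 \<Longrightarrow> distributed (M n) lborel (S n m) (exponential_density (mu n))"
    and lam_pos: "\<And>n. n \<ge> 1 \<Longrightarrow> lam n > 0" and mu_pos: "\<And>n. n \<ge> 1 \<Longrightarrow> mu n > 0" and dn_pos: "\<And>n. n \<ge> 1 \<Longrightarrow> dn n > 0"
    and lam_lim: "lam \<longlonglongrightarrow> lam0" and lam_gt: "lam0 > 0"
    and mu_lim: "mu \<longlonglongrightarrow> mu0"
    and d_pos: "d > 0" and mu_lb: "1 / d < mu0" and mu_ub: "mu0 < lam0"
    and dn_lim: "(\<lambda>n. dn n / real n) \<longlonglongrightarrow> d"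
    and xi_pos: "\<xi> > 0"
  shows "\<exists>E. (\<forall>n\<ge>1. E n \<in> sets (M n) \<and>
            {x \<in> space (M n).
               first_loss n d (dn n) (\<lambda>k. A n k x) (\<lambda>m. S n m x) / ereal (real n)
                 \<le> ereal ((((lam0 / mu0) * d - 1 / mu0) / (lam0 / mu0 - 1)) - \<xi>)} \<subseteq> E n)
           \<and> (\<lambda>n. measure (M n) (E n)) \<longlonglongrightarrow> 0"
proof -
  define om where "om = ((lam0 / mu0) * d - 1 / mu0) / (lam0 / mu0 - 1)"
  define tau where "tau = om - \<xi> / 2"
  have "tau < om" unfolding tau_def using xi_pos by simp
  then obtain theta N where theta: "0 < theta" and margins: "fluid_margins tau theta N d lam0 mu0 theta d 0"
    using fluid_margins_below_loss_time[OF d_pos mu_lb mu_ub] unfolding om_def by blast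
  have mu0: "0 < mu0" using mu_lb d_pos by (meson divide_pos_pos less_trans zero_less_one)
  define w where "w n = nat \<lceil>theta * real n\<rceil>" for n
  define b where "b n = real (N + 1) * (real N * real (w n) + 1) / ((lam n)\<^sup>2 * (theta * real n)\<^sup>2)
    + real (2 * N + 2) * (real (2 * N + 1) * real (w n) + 1) / ((mu n)\<^sup>2 * (theta * real n)\<^sup>2)" for n
  have w_lim: "(\<lambda>n. real (w n) / real n) \<longlonglongrightarrow> theta"
    unfolding w_def using theta by (intro tendsto_ceiling_ratio) simp
  have "\<forall>\<^sub>F n in sequentially. \<exists>F\<in>sets (M n). {x \<in> space (M n).
      first_loss n d (dn n) (\<lambda>k. A n k x) (\<lambda>m. S n m x) / ereal (real n) \<le> ereal (om - \<xi>)} \<subseteq> F \<and>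
      measure (M n) F \<le> b n"
    using eventually_fluid_margins[OF margins lam_lim mu_lim w_lim dn_lim lim_inverse_n']
      eventually_ge_at_top[of 1]
  proof eventually_elim
    case (elim n)
    have "0 < theta * real n" using elim(2) theta by simp
    then have "1 \<le> w n" unfolding w_def by linarith
    then show ?case
      using elim theta d_pos xi_pos unfolding b_def tau_def
      by (intro prob_scaled_first_loss_le[OF ps indep distA distS lam_pos mu_pos dn_pos]) auto
  qed
  moreover have "b \<longlonglongrightarrow> 0"
    unfolding b_def using lam_gt mu0 theta
    by (intro tendsto_add_zero tendsto_grid_bound[OF lam_lim _ w_lim] tendsto_grid_bound[OF mu_lim _ w_lim])
      auto
  ultimately show ?thesis unfolding om_def by (rule vanishing_cover) auto
qed

end
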